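(* Let $X,Y$ be metric spaces and $n\ge1$, and let $f:X\multimap Y$ be a $\{1,n\}$-valued map. Then there is a continuous map $g:X\to\mathit{SP}^n(Y)$ with $u\circ g=f$; namely $g(x)=[y,\dots,y]$ if $f(x)=\{y\}$ and $g(x)=[y_1,\dots,y_n]$ if $f(x)=\{y_1,\dots,y_n\}$.
   Context: An at-most-$n$-valued map $f:X\multimap Y$ is a lower and upper semicontinuous multivalued map whose values are nonempty sets of cardinality at most $n$; it is $\{1,n\}$-valued if $\#f(x)\in\{1,n\}$ for every $x$. $\mathit{SP}^n(Y)$ is the quotient of $Y^n$ by the symmetric group permuting coordinates, with elements $[y_1,\dots,y_n]$; $u:\mathit{SP}^n(Y)\to C_n(Y)$, $u([y_1,\dots,y_n])=\{y_1,\dots,y_n\}$, with $C_n(Y)$ the space of nonempty subsets of cardinality at most $n$ (quotient topology from $Y^n$). *)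

theory Defs
  imports "HOL-Analysis.Analysis" "HOL-Library.Multiset"
begin

definition quotient_topology :: "'a topology \<Rightarrow> ('a \<Rightarrow> 'b) \<Rightarrow> 'b topology" where
  "quotient_topology T q =
     topology (\<lambda>U. U \<subseteq> q ` topspace T \<and> openin T {x \<in> topspace T. q x \<in> U})"

lemma istopology_quotient:
  "istopology (\<lambda>U. U \<subseteq> q ` topspace T \<and> openin T {x \<in> topspace T. q x \<in> U})"
  unfolding istopology_def
proof (rule conjI; intro allI impI)
  fix S1 S2
  assume a: "S1 \<subseteq> q ` topspace T \<and> openin T {x \<in> topspace T. q x \<in> S1}"
     and b: "S2 \<subseteq> q ` topspace T \<and> openin T {x \<in> topspace T. q x \<in> S2}"
  have e: "{x \<in> topspace T. q x \<in> S1 \<inter> S2} =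
        {x \<in> topspace T. q x \<in> S1} \<inter> {x \<in> topspace T. q x \<in> S2}" by auto
  show "S1 \<inter> S2 \<subseteq> q ` topspace T \<and> openin T {x \<in> topspace T. q x \<in> S1 \<inter> S2}"
  proof
    show "S1 \<inter> S2 \<subseteq> q ` topspace T" using a by blast
    show "openin T {x \<in> topspace T. q x \<in> S1 \<inter> S2}"
      unfolding e using a b by (intro openin_Int) auto
  qed
next
  fix K
  assume a: "\<forall>S\<in>K. S \<subseteq> q ` topspace T \<and> openin T {x \<in> topspace T. q x \<in> S}"
  have e: "{x \<in> topspace T. q x \<in> \<Union>K} = (\<Union>S\<in>K. {x \<in> topspace T. q x \<in> S})" by auto
  show "\<Union>K \<subseteq> q ` topspace T \<and> openin T {x \<in> topspace T. q x \<in> \<Union>K}"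
  proof
    show "\<Union>K \<subseteq> q ` topspace T" using a by blast
    show "openin T {x \<in> topspace T. q x \<in> \<Union>K}"
      unfolding e using a by (intro openin_Union) auto
  qed
qed

lemma openin_quotient_topology:
  "openin (quotient_topology T q) U \<longleftrightarrow>
     U \<subseteq> q ` topspace T \<and> openin T {x \<in> topspace T. q x \<in> U}"
  unfolding quotient_topology_def topology_inverse'[OF istopology_quotient] by (rule refl)

text \<open>The n-th symmetric product SP^n(Y): the quotient of Y^n (product topology on
  functions {..<n} \<rightarrow> Y) by the map (y_0,...,y_{n-1}) \<mapsto> [y_0,...,y_{n-1}],
  unordered n-tuples being represented as multisets of size n.\<close>
definition sym_prod_map :: "nat \<Rightarrow> (nat \<Rightarrow> 'b) \<Rightarrow> 'b multiset" where
  "sym_prod_map n y = image_mset y (mset_set {..<n})"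

definition SP :: "nat \<Rightarrow> 'b topology \<Rightarrow> 'b multiset topology" where
  "SP n Y = quotient_topology (product_topology (\<lambda>_. Y) {..<n}) (sym_prod_map n)"

definition u_map :: "'b multiset \<Rightarrow> 'b set" where
  "u_map M = set_mset M"

definition upper_semicontinuous_mv :: "('a::topological_space \<Rightarrow> 'b::topological_space set) \<Rightarrow> bool" where
  "upper_semicontinuous_mv f \<longleftrightarrow> (\<forall>V. open V \<longrightarrow> open {x. f x \<subseteq> V})"

definition lower_semicontinuous_mv :: "('a::topological_space \<Rightarrow> 'b::topological_space set) \<Rightarrow> bool" where
  "lower_semicontinuous_mv f \<longleftrightarrow> (\<forall>V. open V \<longrightarrow> open {x. f x \<inter> V \<noteq> {}})"

definition one_n_valued :: "nat \<Rightarrow> ('a::topological_space \<Rightarrow> 'b::topological_space set) \<Rightarrow> bool" where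
  "one_n_valued n f \<longleftrightarrow> upper_semicontinuous_mv f \<and> lower_semicontinuous_mv f \<and>
     (\<forall>x. finite (f x) \<and> f x \<noteq> {} \<and> card (f x) \<le> n \<and> (card (f x) = 1 \<or> card (f x) = n))"

end

(*
  Take g x to be the multiset of any enumeration z : {..<n} \<rightarrow> f x; since f x has one
  or n points, this does not depend on the enumeration. For continuity at x0, let r > 0 be
  at most half the least distance between points of f x0. By upper and lower
  semicontinuity, for x near x0 the set f x lies in the r-balls around the points of
  f x0 and meets each of them. If f x0 is a point, every enumeration of f x is r-close
  to the constant one; otherwise f x0 has n points, the balls are disjoint, and choosing
  a point of f x in each ball gives an injective, hence bijective, enumeration of f x
  that is r-close to the enumeration of f x0. Thus g lifts locally through the
  quotient map Y^n \<rightarrow> SP^n(Y), which makes it continuous.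
*)
theory Submission
  imports Defs
begin

lemma finite_ex_uniform_pos:
  assumes "finite I" "\<forall>i\<in>I. \<exists>r>0. P i r"
    and mono: "\<And>i r s. P i r \<Longrightarrow> s \<le> r \<Longrightarrow> P i s"
  shows "\<exists>r>(0::real). \<forall>i\<in>I. P i r"
  using assms(1,2)
proof (induction I rule: finite_induct)
  case empty
  then show ?case by (intro exI[of _ 1]) auto
next
  case (insert a F)
  then obtain r1 r2 where "r1 > 0" "P a r1" "r2 > 0" "\<forall>i\<in>F. P i r2" by auto
  then show ?case using mono by (intro exI[of _ "min r1 r2"]) auto
qed

lemma finite_ex_pos_separation:
  fixes A :: "'a::metric_space set"
  assumes "finite A"
  shows "\<exists>r>0. \<forall>y\<in>A. \<forall>y'\<in>A. y \<noteq> y' \<longrightarrow> 2 * r \<le> dist y y'"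
proof -
  have "\<forall>p\<in>A \<times> A. \<exists>r>0. fst p \<noteq> snd p \<longrightarrow> 2 * r \<le> dist (fst p) (snd p)"
  proof
    fix p :: "'a \<times> 'a"
    show "\<exists>r>0. fst p \<noteq> snd p \<longrightarrow> 2 * r \<le> dist (fst p) (snd p)"
    proof (cases "fst p = snd p")
      case True
      then show ?thesis by (intro exI[of _ 1]) simp
    next
      case False
      then show ?thesis by (intro exI[of _ "dist (fst p) (snd p) / 2"]) simp
    qed
  qed
  then obtain r where "r > 0" and r: "\<forall>p\<in>A \<times> A. fst p \<noteq> snd p \<longrightarrow> 2 * r \<le> dist (fst p) (snd p)"
    by (rule finite_ex_uniform_pos[OF finite_cartesian_product[OF assms assms], elim_format]) auto
  then show ?thesis by (intro exI[of _ r]) auto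
qed

lemma openin_finite_product_contains_box:
  fixes z0 :: "nat \<Rightarrow> 'b::metric_space"
  assumes "openin (product_topology (\<lambda>_. euclidean) {..<n}) W" "z0 \<in> W"
  shows "\<exists>r>0. \<forall>z\<in>PiE {..<n} (\<lambda>_. UNIV). (\<forall>i<n. dist (z i) (z0 i) < r) \<longrightarrow> z \<in> W"
proof -
  obtain U where U: "\<forall>i\<in>{..<n}. openin euclidean (U i)" "z0 \<in> PiE {..<n} U" "PiE {..<n} U \<subseteq> W"
    using assms unfolding openin_product_topology_alt by blast
  have "\<forall>i\<in>{..<n}. \<exists>r>0. ball (z0 i) r \<subseteq> U i"
  proof
    fix i assume "i \<in> {..<n}"
    then have "open (U i)" "z0 i \<in> U i" using U(1,2) by (auto simp: PiE_iff)
    then show "\<exists>r>0. ball (z0 i) r \<subseteq> U i" by (simp add: open_contains_ball)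
  qed
  then obtain r where r: "r > 0" "\<forall>i\<in>{..<n}. ball (z0 i) r \<subseteq> U i"
    by (rule finite_ex_uniform_pos[OF finite_lessThan, elim_format])
      (auto intro: subset_trans[OF subset_ball])
  have inU: "z \<in> PiE {..<n} U" if "z \<in> PiE {..<n} (\<lambda>_. UNIV)" "\<forall>i<n. dist (z i) (z0 i) < r" for z
  proof -
    have "z i \<in> U i" if "i < n" for i
    proof -
      have "z i \<in> ball (z0 i) r"
        using \<open>\<forall>i<n. dist (z i) (z0 i) < r\<close> that by (simp add: dist_commute)
      then show ?thesis using r(2) that by blast
    qed
    then show ?thesis using that(1) by (auto simp: PiE_iff)
  qed
  show ?thesis
  proof (intro exI[of _ r] conjI ballI impI r(1))
    fix z assume "z \<in> PiE {..<n} (\<lambda>_. UNIV)" "\<forall>i<n. dist (z i) (z0 i) < r"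
    then have "z \<in> PiE {..<n} U" by (rule inU)
    then show "z \<in> W" using U(3) by blast
  qed
qed

lemma topspace_quotient_topology:
  "topspace (quotient_topology T q) = q ` topspace T"
proof -
  have "{x \<in> topspace T. q x \<in> q ` topspace T} = topspace T" by auto
  then have "openin (quotient_topology T q) (q ` topspace T)"
    by (simp add: openin_quotient_topology)
  moreover have "\<And>U. openin (quotient_topology T q) U \<Longrightarrow> U \<subseteq> q ` topspace T"
    unfolding openin_quotient_topology by auto
  ultimately show ?thesis unfolding topspace_def by blast
qed

lemma ex_enumeration_lessThan:
  assumes "finite A" "A \<noteq> {}" "card A \<le> n"
  shows "\<exists>z. z ` {..<n} = A"
proof -
  obtain h where h: "bij_betw h {..<card A} A"
    using ex_bij_betw_nat_finite assms(1) lessThan_atLeast0 by metis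
  have "card A > 0" using assms(1,2) by auto
  define z where "z i = (if i < card A then h i else h 0)" for i
  have "z ` {..<n} \<subseteq> A"
    using h \<open>card A > 0\<close> by (auto simp: z_def bij_betw_def)
  moreover have "A \<subseteq> z ` {..<n}"
  proof
    fix y assume "y \<in> A"
    then have "y \<in> h ` {..<card A}" using h by (simp add: bij_betw_def)
    then obtain i where "i < card A" "h i = y" by blast
    then show "y \<in> z ` {..<n}" using assms(3) by (auto simp: z_def intro!: image_eqI[of _ _ i])
  qed
  ultimately show ?thesis by blast
qed

lemma inj_on_near_separated:
  fixes z0 w :: "'i \<Rightarrow> 'a::metric_space"
  assumes "inj_on z0 I"
    and sep: "\<forall>i\<in>I. \<forall>j\<in>I. z0 i \<noteq> z0 j \<longrightarrow> 2 * r \<le> dist (z0 i) (z0 j)"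
    and near: "\<forall>i\<in>I. dist (w i) (z0 i) < r"
  shows "inj_on w I"
proof (rule inj_onI)
  fix i j assume ij: "i \<in> I" "j \<in> I" "w i = w j"
  have "dist (z0 i) (z0 j) \<le> dist (z0 i) (w i) + dist (w i) (z0 j)" by (rule dist_triangle)
  also have "\<dots> < r + r"
    using near ij by (intro add_strict_mono) (auto simp: dist_commute)
  finally have "\<not> 2 * r \<le> dist (z0 i) (z0 j)" by simp
  then have "z0 i = z0 j" using sep ij by blast
  then show "i = j" using assms(1) ij by (simp add: inj_on_eq_iff)
qed

definition sym_of_set :: "nat \<Rightarrow> 'b set \<Rightarrow> 'b multiset" where
  "sym_of_set n A = (if card A = 1 then replicate_mset n (the_elem A) else mset_set A)"

lemma set_mset_sym_of_set:
  assumes "n \<ge> 1" "finite A"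
  shows "set_mset (sym_of_set n A) = A"
proof (cases "card A = 1")
  case True
  then obtain y where "A = {y}" using card_1_singletonE by blast
  then show ?thesis using assms(1) by (simp add: sym_of_set_def)
next
  case False
  then show ?thesis using assms(2) by (simp add: sym_of_set_def)
qed

lemma sym_prod_map_restrict:
  "sym_prod_map n (restrict z {..<n}) = sym_prod_map n z"
  unfolding sym_prod_map_def by (rule image_mset_cong) auto

lemma sym_prod_map_enumeration:
  assumes "z ` {..<n} = A" "card A = 1 \<or> card A = n"
  shows "sym_prod_map n z = sym_of_set n A"
proof (cases "card A = 1")
  case True
  then obtain y where y: "A = {y}" using card_1_singletonE by blast
  then have "image_mset z (mset_set {..<n}) = image_mset (\<lambda>_. y) (mset_set {..<n})"
    using assms(1) by (intro image_mset_cong) auto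
  then show ?thesis using True y by (simp add: sym_prod_map_def sym_of_set_def image_mset_const_eq)
next
  case False
  then have "inj_on z {..<n}" using assms by (intro eq_card_imp_inj_on) auto
  then show ?thesis
    using False assms(1) by (simp add: sym_prod_map_def sym_of_set_def image_mset_mset_set)
qed

lemma sym_prod_map_in_topspace_SP:
  "sym_prod_map n z \<in> topspace (SP n euclidean)"
proof -
  have "restrict z {..<n} \<in> topspace (product_topology (\<lambda>_. euclidean) {..<n})" by simp
  then have "sym_prod_map n (restrict z {..<n}) \<in>
      sym_prod_map n ` topspace (product_topology (\<lambda>_. euclidean) {..<n})" by (rule imageI)
  then show ?thesis by (simp add: SP_def topspace_quotient_topology sym_prod_map_restrict)
qed

lemma openin_SP_contains_box:
  fixes z0 :: "nat \<Rightarrow> 'b::metric_space"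
  assumes "openin (SP n euclidean) U" "sym_prod_map n z0 \<in> U"
  shows "\<exists>r>0. \<forall>z. (\<forall>i<n. dist (z i) (z0 i) < r) \<longrightarrow> sym_prod_map n z \<in> U"
proof -
  let ?W = "{z \<in> PiE {..<n} (\<lambda>_. UNIV). sym_prod_map n z \<in> U}"
  have W: "openin (product_topology (\<lambda>_. euclidean) {..<n}) ?W"
    using assms(1) by (simp add: SP_def openin_quotient_topology)
  have "restrict z0 {..<n} \<in> ?W"
    using assms(2) by (simp add: sym_prod_map_restrict)
  from openin_finite_product_contains_box[OF W this]
  obtain r where "r > 0" and r: "\<forall>z\<in>PiE {..<n} (\<lambda>_. UNIV).
      (\<forall>i<n. dist (z i) (restrict z0 {..<n} i) < r) \<longrightarrow> z \<in> ?W"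
    by blast
  have "sym_prod_map n z \<in> U" if "\<forall>i<n. dist (z i) (z0 i) < r" for z
  proof -
    have "\<forall>i<n. dist (restrict z {..<n} i) (restrict z0 {..<n} i) < r" using that by simp
    then have "restrict z {..<n} \<in> ?W" using r by simp
    then show ?thesis by (simp add: sym_prod_map_restrict)
  qed
  then show ?thesis using \<open>r > 0\<close> by (intro exI[of _ r]) blast
qed

lemma continuous_map_SP_euclideanI:
  fixes g :: "'a::topological_space \<Rightarrow> 'b::metric_space multiset"
  assumes "\<And>x0. \<exists>z0. sym_prod_map n z0 = g x0 \<and> (\<forall>e>0. \<exists>N. open N \<and> x0 \<in> N \<and>
             (\<forall>x\<in>N. \<exists>z. sym_prod_map n z = g x \<and> (\<forall>i<n. dist (z i) (z0 i) < e)))"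
  shows "continuous_map euclidean (SP n euclidean) g"
  unfolding continuous_map_def
proof (intro conjI allI impI)
  show "g \<in> topspace euclidean \<rightarrow> topspace (SP n euclidean)"
  proof
    fix x
    obtain z0 where "sym_prod_map n z0 = g x" using assms by blast
    then show "g x \<in> topspace (SP n euclidean)" using sym_prod_map_in_topspace_SP[of n z0] by simp
  qed
next
  fix U :: "'b multiset set"
  assume U: "openin (SP n euclidean) U"
  have "\<exists>N. open N \<and> x0 \<in> N \<and> N \<subseteq> {x. g x \<in> U}" if "g x0 \<in> U" for x0
  proof -
    obtain z0 where z0: "sym_prod_map n z0 = g x0" and
      near: "\<And>e. e > 0 \<Longrightarrow> \<exists>N. open N \<and> x0 \<in> N \<and>
              (\<forall>x\<in>N. \<exists>z. sym_prod_map n z = g x \<and> (\<forall>i<n. dist (z i) (z0 i) < e))"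
      using assms by blast
    have "sym_prod_map n z0 \<in> U" using that z0 by simp
    from openin_SP_contains_box[OF U this]
    obtain r where "r > 0" and r: "\<forall>z. (\<forall>i<n. dist (z i) (z0 i) < r) \<longrightarrow> sym_prod_map n z \<in> U"
      by blast
    obtain N where "open N" "x0 \<in> N"
      and lift: "\<forall>x\<in>N. \<exists>z. sym_prod_map n z = g x \<and> (\<forall>i<n. dist (z i) (z0 i) < r)"
      using near[OF \<open>r > 0\<close>] by blast
    moreover have "g x \<in> U" if "x \<in> N" for x
    proof -
      obtain z where "sym_prod_map n z = g x" "\<forall>i<n. dist (z i) (z0 i) < r"
        using lift \<open>x \<in> N\<close> by blast
      then show ?thesis using r by metis
    qed
    ultimately show ?thesis by (intro exI[of _ N]) auto
  qed
  then have "open {x. g x \<in> U}" by (subst open_subopen) blast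
  then show "openin euclidean {x \<in> topspace euclidean. g x \<in> U}" by simp
qed

lemma ex_close_enumeration_of_constant:
  fixes B :: "'a::metric_space set"
  assumes "\<forall>i<n. z0 i = a" "finite B" "B \<noteq> {}" "card B \<le> n" "B \<subseteq> ball a r"
  shows "\<exists>z. z ` {..<n} = B \<and> (\<forall>i<n. dist (z i) (z0 i) < r)"
proof -
  obtain z where z: "z ` {..<n} = B" using ex_enumeration_lessThan assms(2-4) by blast
  have "dist (z i) (z0 i) < r" if "i < n" for i
  proof -
    have "z i \<in> ball a r" using z assms(5) that by blast
    then show ?thesis using assms(1) that by (simp add: dist_commute)
  qed
  then show ?thesis using z by (intro exI[of _ z]) simp
qed

lemma ex_close_enumeration_of_separated:
  fixes z0 :: "nat \<Rightarrow> 'a::metric_space"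
  assumes "inj_on z0 {..<n}"
    and sep: "\<forall>i\<in>{..<n}. \<forall>j\<in>{..<n}. z0 i \<noteq> z0 j \<longrightarrow> 2 * r \<le> dist (z0 i) (z0 j)"
    and B: "finite B" "card B = n"
    and meet: "\<forall>i<n. B \<inter> ball (z0 i) r \<noteq> {}"
  shows "\<exists>z. z ` {..<n} = B \<and> (\<forall>i<n. dist (z i) (z0 i) < r)"
proof -
  have "\<forall>i. \<exists>w. i < n \<longrightarrow> w \<in> B \<and> dist w (z0 i) < r"
    using meet by (auto simp: dist_commute)
  from choice[OF this] obtain w where w: "\<forall>i. i < n \<longrightarrow> w i \<in> B \<and> dist (w i) (z0 i) < r"
    by blast
  then have "\<forall>i\<in>{..<n}. dist (w i) (z0 i) < r" by simp
  with assms(1) sep have "inj_on w {..<n}" by (rule inj_on_near_separated)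
  then have "card (w ` {..<n}) = card B" using B(2) by (simp add: card_image)
  moreover have "w ` {..<n} \<subseteq> B" using w by blast
  ultimately have "w ` {..<n} = B" using B(1) by (simp add: card_subset_eq)
  then show ?thesis using w by (intro exI[of _ w]) simp
qed

lemma ex_close_enumeration:
  fixes A B :: "'a::metric_space set"
  assumes z0: "z0 ` {..<n} = A" and A: "card A = 1 \<or> card A = n"
    and B: "finite B" "card B = 1 \<or> card B = n"
    and sep: "\<forall>y\<in>A. \<forall>y'\<in>A. y \<noteq> y' \<longrightarrow> 2 * r \<le> dist y y'"
    and cover: "B \<subseteq> (\<Union>y\<in>A. ball y r)"
    and meet: "\<forall>y\<in>A. B \<inter> ball y r \<noteq> {}"
  shows "\<exists>z. z ` {..<n} = B \<and> (\<forall>i<n. dist (z i) (z0 i) < r)"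
proof -
  have z0A: "z0 i \<in> A" if "i < n" for i using z0 that by auto
  have meet': "\<forall>i<n. B \<inter> ball (z0 i) r \<noteq> {}" using meet z0A by blast
  consider y where "B = {y}" | "card B = n" "card A = 1" | "card B = n" "card A \<noteq> 1"
    using B(2) card_1_singletonE by metis
  then show ?thesis
  proof cases
    case (1 y)
    then have "A \<noteq> {}" using cover by blast
    then have "n \<noteq> 0" using z0[symmetric] by (simp add: lessThan_empty_iff)
    then have "(\<lambda>_. y) ` {..<n} = B" using 1 by auto
    moreover have "\<forall>i<n. dist y (z0 i) < r" using meet' 1 by (auto simp: dist_commute)
    ultimately show ?thesis by (intro exI[of _ "\<lambda>_. y"]) simp
  next
    case 2
    then obtain a where a: "A = {a}" using card_1_singletonE by blast
    then have "A \<noteq> {}" by simp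
    then have "n \<noteq> 0" using z0[symmetric] by (simp add: lessThan_empty_iff)
    then have "B \<noteq> {}" using 2 by auto
    moreover have "\<forall>i<n. z0 i = a" using z0A a by blast
    ultimately show ?thesis
      using 2 B(1) cover a by (intro ex_close_enumeration_of_constant) auto
  next
    case 3
    then have "card (z0 ` {..<n}) = card {..<n}" using A z0 by simp
    then have "inj_on z0 {..<n}" by (intro eq_card_imp_inj_on) simp
    moreover have "\<forall>i\<in>{..<n}. \<forall>j\<in>{..<n}. z0 i \<noteq> z0 j \<longrightarrow> 2 * r \<le> dist (z0 i) (z0 j)"
      using sep z0A by blast
    ultimately show ?thesis using B(1) 3(1) meet' by (rule ex_close_enumeration_of_separated)
  qed
qed

lemma one_n_valued_close_enumeration:
  fixes f :: "'a::topological_space \<Rightarrow> 'b::metric_space set"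
  assumes f: "one_n_valued n f" and z0: "z0 ` {..<n} = f x0" and "e > 0"
  shows "\<exists>N. open N \<and> x0 \<in> N \<and> (\<forall>x\<in>N. \<exists>z. z ` {..<n} = f x \<and> (\<forall>i<n. dist (z i) (z0 i) < e))"
proof -
  have fin: "finite (f x)" and card: "card (f x) = 1 \<or> card (f x) = n" for x
    using f by (auto simp: one_n_valued_def)
  obtain r0 where "r0 > 0" and sep0: "\<forall>y\<in>f x0. \<forall>y'\<in>f x0. y \<noteq> y' \<longrightarrow> 2 * r0 \<le> dist y y'"
    using finite_ex_pos_separation[OF fin[of x0]] by blast
  define r where "r = min e r0"
  have "r > 0" using \<open>r0 > 0\<close> \<open>e > 0\<close> by (simp add: r_def)
  have sep: "\<forall>y\<in>f x0. \<forall>y'\<in>f x0. y \<noteq> y' \<longrightarrow> 2 * r \<le> dist y y'"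
  proof (intro ballI impI)
    fix y y' assume "y \<in> f x0" "y' \<in> f x0" "y \<noteq> y'"
    then have "2 * r0 \<le> dist y y'" using sep0 by blast
    then show "2 * r \<le> dist y y'" by (simp add: r_def)
  qed
  define N where "N = {x. f x \<subseteq> (\<Union>y\<in>f x0. ball y r)} \<inter> (\<Inter>y\<in>f x0. {x. f x \<inter> ball y r \<noteq> {}})"
  have usc: "open {x. f x \<subseteq> V}" and lsc: "open {x. f x \<inter> V \<noteq> {}}" if "open V" for V
    using f that by (simp_all add: one_n_valued_def upper_semicontinuous_mv_def lower_semicontinuous_mv_def)
  have "open N"
    unfolding N_def by (intro open_Int usc open_INT open_UN ballI lsc open_ball fin)
  moreover have "x0 \<in> N"
  proof -
    have "y \<in> ball y r" for y using \<open>r > 0\<close> by simp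
    then show ?thesis unfolding N_def by blast
  qed
  moreover have "\<exists>z. z ` {..<n} = f x \<and> (\<forall>i<n. dist (z i) (z0 i) < e)" if "x \<in> N" for x
  proof -
    have "f x \<subseteq> (\<Union>y\<in>f x0. ball y r)" "\<forall>y\<in>f x0. f x \<inter> ball y r \<noteq> {}"
      using that by (simp_all add: N_def)
    then obtain z where z: "z ` {..<n} = f x" "\<forall>i<n. dist (z i) (z0 i) < r"
      using ex_close_enumeration[OF z0 card fin card sep] by blast
    have "r \<le> e" by (simp add: r_def)
    then have "\<forall>i<n. dist (z i) (z0 i) < e" using z(2) by (auto intro: less_le_trans)
    then show ?thesis using z(1) by (intro exI[of _ z]) simp
  qed
  ultimately show ?thesis by (intro exI[of _ N]) simp
qed

lemma continuous_map_sym_of_set: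
  fixes f :: "'a::topological_space \<Rightarrow> 'b::metric_space set"
  assumes f: "one_n_valued n f"
  shows "continuous_map euclidean (SP n euclidean) (\<lambda>x. sym_of_set n (f x))"
proof (rule continuous_map_SP_euclideanI)
  have fx: "finite (f x)" "f x \<noteq> {}" "card (f x) \<le> n" "card (f x) = 1 \<or> card (f x) = n" for x
    using f by (auto simp: one_n_valued_def)
  have lift: "sym_prod_map n z = sym_of_set n (f x)" if "z ` {..<n} = f x" for z x
    using sym_prod_map_enumeration[OF that fx(4)] .
  fix x0
  obtain z0 where z0: "z0 ` {..<n} = f x0" using ex_enumeration_lessThan[OF fx(1-3)[of x0]] by blast
  show "\<exists>z0. sym_prod_map n z0 = sym_of_set n (f x0) \<and> (\<forall>e>0. \<exists>N. open N \<and> x0 \<in> N \<and>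
          (\<forall>x\<in>N. \<exists>z. sym_prod_map n z = sym_of_set n (f x) \<and> (\<forall>i<n. dist (z i) (z0 i) < e)))"
  proof (intro exI[of _ z0] conjI allI impI)
    show "sym_prod_map n z0 = sym_of_set n (f x0)" by (rule lift[OF z0])
    fix e :: real assume "e > 0"
    from one_n_valued_close_enumeration[OF f z0 this]
    obtain N where N: "open N" "x0 \<in> N"
      and near: "\<forall>x\<in>N. \<exists>z. z ` {..<n} = f x \<and> (\<forall>i<n. dist (z i) (z0 i) < e)"
      by (elim exE conjE) (rule that)
    have "\<exists>z. sym_prod_map n z = sym_of_set n (f x) \<and> (\<forall>i<n. dist (z i) (z0 i) < e)" if x: "x \<in> N" for x
    proof -
      obtain z where "z ` {..<n} = f x" "\<forall>i<n. dist (z i) (z0 i) < e" using near x by blast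
      then show ?thesis using lift by (intro exI[of _ z]) simp
    qed
    then show "\<exists>N. open N \<and> x0 \<in> N \<and>
        (\<forall>x\<in>N. \<exists>z. sym_prod_map n z = sym_of_set n (f x) \<and> (\<forall>i<n. dist (z i) (z0 i) < e))"
      using N by (intro exI[of _ N]) simp
  qed
qed

theorem mainTheorem14:
  fixes f :: "'a::metric_space \<Rightarrow> 'b::metric_space set" and n :: nat
  assumes "n \<ge> 1" and "one_n_valued n f"
  shows "\<exists>g. continuous_map euclidean (SP n euclidean) g \<and> (\<forall>x. u_map (g x) = f x)"
proof -
  have "u_map (sym_of_set n (f x)) = f x" for x
  proof -
    have "finite (f x)" using assms(2) by (simp add: one_n_valued_def)
    then show ?thesis using set_mset_sym_of_set[OF assms(1)] by (simp add: u_map_def)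
  qed
  then show ?thesis
    using continuous_map_sym_of_set[OF assms(2)] by (intro exI[of _ "\<lambda>x. sym_of_set n (f x)"]) simp
qed

end
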